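(* Let $N\ge1$ and $1\le m\le N$ be integers and let $D_{N,m}=|D_{N,m}\rangle\langle D_{N,m}|$. Then $C_S(D_{N,m})\ge N-2m+1$.
   Context: The Dicke state is $|D_{N,m}\rangle=\binom{N}{m}^{-1/2}\sum_\pi|0\rangle^{\otimes(N-m)}|1\rangle^{\otimes m}$, the normalized uniform superposition of all $N$-bit computational basis states of Hamming weight $m$. $\mathbb{I},\sigma_X,\sigma_Y,\sigma_Z$ are the identity and Pauli matrices. The notation $\sum_\pi \mathbb{I}^{\otimes j}\otimes A^{\otimes (N-j)}$ denotes the sum, over all distinct placements, of tensor products in which exactly $j$ of the $N$ factors are $\mathbb{I}$ and the other $N-j$ are $A$ (each distinct arrangement counted once). Measurement complexity: for an $N$-qubit permutation-invariant operator $\rho$, $C_S(\rho)$ is the minimal $n_A$ such that there exist real $b_i,c_i,d_i$ and real $\alpha_{ij}$ ($1\le i\le n_A$, $0\le j\le N$) with $\rho=\sum_{i=1}^{n_A}\sum_{j=0}^{N}\alpha_{ij}\sum_\pi\mathbb{I}^{\otimes j}\otimes A_i^{\otimes(N-j)}$, $A_i=b_i\sigma_X+c_i\sigma_Y+d_i\sigma_Z$. *)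

theory Defs
  imports Complex_Main "HOL-Library.Extended_Nat"
begin

text \<open>Computational basis states of N qubits: bit strings x :: nat \<Rightarrow> bool with x k = False
  for k \<ge> N (bit k is the state of qubit k; False = |0>, True = |1>).
  An N-qubit operator is represented by its matrix entries op x y = <x|op|y>,
  a single-qubit operator by a function bool \<Rightarrow> bool \<Rightarrow> complex.\<close>

definition bitstrings :: "nat \<Rightarrow> (nat \<Rightarrow> bool) set" where
  "bitstrings N = {x. \<forall>k. N \<le> k \<longrightarrow> \<not> x k}"

type_synonym qop = "(nat \<Rightarrow> bool) \<Rightarrow> (nat \<Rightarrow> bool) \<Rightarrow> complex"
type_synonym qop1 = "bool \<Rightarrow> bool \<Rightarrow> complex"

definition ident1 :: qop1 where "ident1 a b = (if a = b then 1 else 0)"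
definition sigmaX :: qop1 where "sigmaX a b = (if a \<noteq> b then 1 else 0)"
definition sigmaY :: qop1 where
  "sigmaY a b = (if \<not> a \<and> b then - \<i> else if a \<and> \<not> b then \<i> else 0)"
definition sigmaZ :: qop1 where
  "sigmaZ a b = (if a = b then (if a then -1 else 1) else 0)"

definition pauli_comb :: "real \<Rightarrow> real \<Rightarrow> real \<Rightarrow> qop1" where
  "pauli_comb b c d u v = of_real b * sigmaX u v + of_real c * sigmaY u v + of_real d * sigmaZ u v"

text \<open>sum over all placements of j identities and N-j copies of A:
  \<Sum>_\<pi> I^{\<otimes> j} \<otimes> A^{\<otimes>(N-j)}. The set S is the set of positions carrying the identity.\<close>
definition sym_term :: "nat \<Rightarrow> nat \<Rightarrow> qop1 \<Rightarrow> qop" where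
  "sym_term N j A x y =
     (\<Sum>S \<in> {S. S \<subseteq> {..<N} \<and> card S = j}.
        \<Prod>k<N. (if k \<in> S then ident1 else A) (x k) (y k))"

definition hweight :: "nat \<Rightarrow> (nat \<Rightarrow> bool) \<Rightarrow> nat" where
  "hweight N x = card {k. k < N \<and> x k}"

definition dicke :: "nat \<Rightarrow> nat \<Rightarrow> (nat \<Rightarrow> bool) \<Rightarrow> complex" where
  "dicke N m x = (if x \<in> bitstrings N \<and> hweight N x = m
                  then of_real (1 / sqrt (real (N choose m))) else 0)"

definition dicke_proj :: "nat \<Rightarrow> nat \<Rightarrow> qop" where
  "dicke_proj N m x y = dicke N m x * cnj (dicke N m y)"

definition decomposable :: "nat \<Rightarrow> qop \<Rightarrow> nat \<Rightarrow> bool" where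
  "decomposable N \<rho> n \<longleftrightarrow>
    (\<exists>(b::nat \<Rightarrow> real) (c::nat \<Rightarrow> real) (d::nat \<Rightarrow> real) (\<alpha>::nat \<Rightarrow> nat \<Rightarrow> real).
       \<forall>x \<in> bitstrings N. \<forall>y \<in> bitstrings N.
         \<rho> x y = (\<Sum>i\<in>{1..n}. \<Sum>j\<le>N. of_real (\<alpha> i j) * sym_term N j (pauli_comb (b i) (c i) (d i)) x y))"

text \<open>Measurement complexity C_S (the minimum; \<infinity> if no decomposition exists).\<close>
definition meas_complexity :: "nat \<Rightarrow> qop \<Rightarrow> enat" where
  "meas_complexity N \<rho> = Inf {enat n | n. decomposable N \<rho> n}"

end

theory Submission
  imports Defs "HOL-Library.FuncSet"
begin

text \<open>If \<open>D\<^sub>N\<^sub>,\<^sub>m\<close> had a decomposition with \<open>n \<le> N - 2m\<close> settings \<open>A\<^sub>i\<close>, apply the linear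
  functional \<open>\<rho> \<mapsto> Tr(\<rho> (W\<^sub>0 \<otimes> \<dots> \<otimes> W\<^sub>N\<^sub>-\<^sub>1))\<close> with all \<open>W\<^sub>k\<close> traceless. Tracelessness kills
  every term containing an identity factor, so only the terms \<open>A\<^sub>i\<^sup>\<otimes>\<^sup>N\<close> survive, each contributing
  \<open>\<Prod>\<^sub>k Tr(A\<^sub>i W\<^sub>k)\<close>. Taking \<open>W\<^sub>k = \<sigma>\<^sub>Z + p\<^sub>k |0\<rangle>\<langle>1|\<close> orthogonal to \<open>A\<^sub>k\<^sub>+\<^sub>1\<close> on the first \<open>N - 2m\<close>
  qubits and \<open>W\<^sub>k = \<sigma>\<^sub>X\<close> on the last \<open>2m\<close> (which annihilates settings without \<open>\<sigma>\<^sub>X, \<sigma>\<^sub>Y\<close> part),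
  every surviving term vanishes. On \<open>D\<^sub>N\<^sub>,\<^sub>m\<close> itself the functional is a positive multiple of the
  number of pairs of weight-\<open>m\<close> strings that are complementary on the last \<open>2m\<close> qubits; weight
  counting forces both strings to vanish on the first \<open>N - 2m\<close> qubits, where \<open>W\<^sub>k\<close> has entry 1,
  and such pairs exist.\<close>

lemma bitstrings_eq_image_Pow: "bitstrings N = (\<lambda>S k. k \<in> S) ` Pow {..<N}"
proof (intro equalityI subsetI)
  fix x assume "x \<in> bitstrings N"
  then have "x = (\<lambda>k. k \<in> {k. k < N \<and> x k})" "{k. k < N \<and> x k} \<in> Pow {..<N}"
    by (auto simp: bitstrings_def not_le[symmetric])
  then show "x \<in> (\<lambda>S k. k \<in> S) ` Pow {..<N}" by blast
qed (auto simp: bitstrings_def)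

lemma finite_bitstrings [simp]: "finite (bitstrings N)"
  by (simp add: bitstrings_eq_image_Pow)

lemma sum_bitstrings_prod:
  fixes f :: "nat \<Rightarrow> bool \<Rightarrow> 'a::comm_semiring_1"
  shows "(\<Sum>x\<in>bitstrings N. \<Prod>k<N. f k (x k)) = (\<Prod>k<N. \<Sum>u\<in>UNIV. f k u)"
proof -
  have "(\<Prod>k<N. \<Sum>u\<in>UNIV. f k u) = (\<Sum>g\<in>Pi\<^sub>E {..<N} (\<lambda>_. UNIV). \<Prod>k<N. f k (g k))"
    by (rule prod_sum_PiE) auto
  also have "\<dots> = (\<Sum>x\<in>bitstrings N. \<Prod>k<N. f k (x k))"
    by (rule sum.reindex_bij_witness[of _ "\<lambda>x. restrict x {..<N}" "\<lambda>g k. k < N \<and> g k"])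
       (auto simp: bitstrings_def fun_eq_iff PiE_def extensional_def not_le[symmetric])
  finally show ?thesis ..
qed

definition trace1 :: "qop1 \<Rightarrow> qop1 \<Rightarrow> complex" where
  "trace1 A W = (\<Sum>u\<in>UNIV. \<Sum>v\<in>UNIV. A u v * W v u)"

definition trace_tensor :: "nat \<Rightarrow> qop \<Rightarrow> (nat \<Rightarrow> qop1) \<Rightarrow> complex" where
  "trace_tensor N \<rho> W =
     (\<Sum>x\<in>bitstrings N. \<Sum>y\<in>bitstrings N. \<rho> x y * (\<Prod>k<N. W k (y k) (x k)))"

lemma trace_tensor_prod:
  "trace_tensor N (\<lambda>x y. \<Prod>k<N. B k (x k) (y k)) W = (\<Prod>k<N. trace1 (B k) (W k))"
proof -
  have "trace_tensor N (\<lambda>x y. \<Prod>k<N. B k (x k) (y k)) W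
      = (\<Sum>x\<in>bitstrings N. \<Sum>y\<in>bitstrings N. \<Prod>k<N. B k (x k) (y k) * W k (y k) (x k))"
    by (simp add: trace_tensor_def prod.distrib)
  also have "\<dots> = (\<Sum>x\<in>bitstrings N. \<Prod>k<N. \<Sum>v\<in>UNIV. B k (x k) v * W k v (x k))"
    by (intro sum.cong refl sum_bitstrings_prod)
  also have "\<dots> = (\<Prod>k<N. trace1 (B k) (W k))"
    unfolding trace1_def by (rule sum_bitstrings_prod)
  finally show ?thesis .
qed

lemma trace_tensor_sum:
  "trace_tensor N (\<lambda>x y. \<Sum>i\<in>I. f i x y) W = (\<Sum>i\<in>I. trace_tensor N (f i) W)"
  unfolding trace_tensor_def sum_distrib_right
  by (subst sum.swap, rule sum.cong[OF refl], rule sum.swap)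

lemma trace_tensor_scale: "trace_tensor N (\<lambda>x y. c * f x y) W = c * trace_tensor N f W"
  unfolding trace_tensor_def by (simp add: sum_distrib_left mult.assoc)

lemma trace_tensor_cong:
  "(\<And>x y. x \<in> bitstrings N \<Longrightarrow> y \<in> bitstrings N \<Longrightarrow> \<rho> x y = \<rho>' x y)
   \<Longrightarrow> trace_tensor N \<rho> W = trace_tensor N \<rho>' W"
  unfolding trace_tensor_def by (intro sum.cong) auto

lemma trace_tensor_sym_term:
  assumes traceless: "\<And>k. k < N \<Longrightarrow> trace1 ident1 (W k) = 0"
  shows "trace_tensor N (sym_term N j A) W = (if j = 0 then \<Prod>k<N. trace1 A (W k) else 0)"
proof -
  let ?Sets = "{S. S \<subseteq> {..<N} \<and> card S = j}"
  have "trace_tensor N (sym_term N j A) W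
      = (\<Sum>S\<in>?Sets. \<Prod>k<N. trace1 (if k \<in> S then ident1 else A) (W k))"
    unfolding sym_term_def[abs_def] trace_tensor_sum by (intro sum.cong refl trace_tensor_prod)
  also have "\<dots> = (if j = 0 then \<Prod>k<N. trace1 A (W k) else 0)"
  proof (cases "j = 0")
    case True
    then have "?Sets = {{}}"
      by (auto dest: finite_subset[OF _ finite_lessThan])
    with True show ?thesis by simp
  next
    case False
    have "(\<Prod>k<N. trace1 (if k \<in> S then ident1 else A) (W k)) = 0" if "S \<in> ?Sets" for S
    proof -
      from that False obtain k where k: "k \<in> S" by fastforce
      with that have "k < N" by auto
      moreover have "trace1 (if k \<in> S then ident1 else A) (W k) = 0"
        using k traceless \<open>k < N\<close> by simp
      ultimately show ?thesis by (intro prod_zero) blast+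
    qed
    then have "(\<Sum>S\<in>?Sets. \<Prod>k<N. trace1 (if k \<in> S then ident1 else A) (W k)) = 0"
      by (intro sum.neutral) blast
    with False show ?thesis by simp
  qed
  finally show ?thesis .
qed

lemma hweight_split:
  assumes "L \<le> N"
  shows "hweight N x = hweight L x + card {k \<in> {L..<N}. x k}"
proof -
  have "{k. k < N \<and> x k} = {k. k < L \<and> x k} \<union> {k \<in> {L..<N}. x k}"
    using assms by auto
  moreover have "card ({k. k < L \<and> x k} \<union> {k \<in> {L..<N}. x k})
      = card {k. k < L \<and> x k} + card {k \<in> {L..<N}. x k}"
    by (rule card_Un_disjoint) auto
  ultimately show ?thesis
    unfolding hweight_def by simp
qed

lemma card_complementary:
  assumes "\<forall>k \<in> {L..<N}. x k \<noteq> y k"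
  shows "card {k \<in> {L..<N}. x k} + card {k \<in> {L..<N}. y k} = N - L"
proof -
  have "{k \<in> {L..<N}. y k} = {L..<N} - {k \<in> {L..<N}. x k}"
    using assms by blast
  moreover have "card ({L..<N} - {k \<in> {L..<N}. x k}) = card {L..<N} - card {k \<in> {L..<N}. x k}"
    by (rule card_Diff_subset) auto
  ultimately have "card {k \<in> {L..<N}. y k} = (N - L) - card {k \<in> {L..<N}. x k}"
    by simp
  moreover have "card {k \<in> {L..<N}. x k} \<le> card {L..<N}"
    by (rule card_mono) auto
  ultimately show ?thesis by simp
qed

lemma complementary_tail_imp_zero_head:
  assumes "L \<le> N" "hweight N x + hweight N y = N - L"
    and "\<forall>k \<in> {L..<N}. x k \<noteq> y k" and "k < L"
  shows "\<not> x k" "\<not> y k"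
proof -
  have "hweight L x + hweight L y = 0"
    using assms(2) hweight_split[OF assms(1), of x] hweight_split[OF assms(1), of y]
      card_complementary[OF assms(3)]
    by linarith
  then have "{k. k < L \<and> x k} = {}" "{k. k < L \<and> y k} = {}"
    by (simp_all add: hweight_def)
  with \<open>k < L\<close> show "\<not> x k" "\<not> y k" by auto
qed

lemma prod_tail_sigmaX:
  assumes "L \<le> N" "hweight N x + hweight N y = N - L"
    and head: "\<And>k. k < L \<Longrightarrow> W k False False = 1"
    and tail: "\<And>k. L \<le> k \<Longrightarrow> k < N \<Longrightarrow> W k = sigmaX"
  shows "(\<Prod>k<N. W k (y k) (x k)) = (if \<forall>k \<in> {L..<N}. x k \<noteq> y k then 1 else 0)"
proof (cases "\<forall>k \<in> {L..<N}. x k \<noteq> y k")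
  case True
  have "W k (y k) (x k) = 1" if "k < N" for k
  proof (cases "k < L")
    case True
    with complementary_tail_imp_zero_head[OF assms(1,2) \<open>\<forall>k \<in> {L..<N}. x k \<noteq> y k\<close>] head
    show ?thesis by simp
  next
    case False
    with True that tail show ?thesis by (simp add: sigmaX_def)
  qed
  with True show ?thesis by simp
next
  case False
  then obtain k where "k \<in> {L..<N}" "x k = y k" by blast
  with tail have "k < N" "W k (y k) (x k) = 0" by (auto simp: sigmaX_def)
  then have "(\<Prod>k<N. W k (y k) (x k)) = 0" by (intro prod_zero) auto
  with False show ?thesis by (simp del: prod_zero_iff)
qed

lemma dicke_proj_eq:
  assumes "x \<in> bitstrings N" "y \<in> bitstrings N"
  shows "dicke_proj N m x y =
    (if hweight N x = m \<and> hweight N y = m then of_real (1 / real (N choose m)) else 0)"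
proof -
  have "complex_of_real (1 / sqrt (real (N choose m))) * of_real (1 / sqrt (real (N choose m)))
      = of_real (1 / real (N choose m))"
    by (simp flip: of_real_mult)
  with assms show ?thesis by (simp add: dicke_proj_def dicke_def)
qed

lemma trace_tensor_dicke_proj_neq_0:
  assumes "2 * m \<le> N"
    and head: "\<And>k. k < N - 2 * m \<Longrightarrow> W k False False = 1"
    and tail: "\<And>k. N - 2 * m \<le> k \<Longrightarrow> k < N \<Longrightarrow> W k = sigmaX"
  shows "trace_tensor N (dicke_proj N m) W \<noteq> 0"
proof -
  define L where "L = N - 2 * m"
  define P where "P x y \<longleftrightarrow> hweight N x = m \<and> hweight N y = m \<and> (\<forall>k \<in> {L..<N}. x k \<noteq> y k)"
    for x y
  have summand: "dicke_proj N m x y * (\<Prod>k<N. W k (y k) (x k))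
      = of_real (1 / real (N choose m)) * of_nat (if P x y then 1 else 0)"
    if "x \<in> bitstrings N" "y \<in> bitstrings N" for x y
  proof (cases "hweight N x = m \<and> hweight N y = m")
    case True
    with assms(1) have "hweight N x + hweight N y = N - L" by (simp add: L_def)
    from prod_tail_sigmaX[OF _ this head[folded L_def] tail[folded L_def]]
    have "(\<Prod>k<N. W k (y k) (x k)) = (if \<forall>k \<in> {L..<N}. x k \<noteq> y k then 1 else 0)"
      by (simp add: L_def)
    with True that show ?thesis by (simp add: dicke_proj_eq P_def)
  next
    case False
    with that show ?thesis by (auto simp: dicke_proj_eq P_def)
  qed
  have trace_eq: "trace_tensor N (dicke_proj N m) W = of_real (1 / real (N choose m)) *
      of_nat (\<Sum>x\<in>bitstrings N. \<Sum>y\<in>bitstrings N. if P x y then 1 else 0)"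
    unfolding trace_tensor_def of_nat_sum sum_distrib_left by (intro sum.cong refl summand)
  define x0 where "x0 k \<longleftrightarrow> L \<le> k \<and> k < L + m" for k
  define y0 where "y0 k \<longleftrightarrow> L + m \<le> k \<and> k < N" for k
  have "x0 \<in> bitstrings N" "y0 \<in> bitstrings N"
    using assms by (auto simp: x0_def y0_def bitstrings_def L_def)
  moreover have "P x0 y0"
  proof -
    have "{k. k < N \<and> x0 k} = {L..<L + m}" "{k. k < N \<and> y0 k} = {L + m..<N}"
      using assms(1) by (auto simp: x0_def y0_def L_def)
    moreover have "\<forall>k \<in> {L..<N}. x0 k \<noteq> y0 k"
      by (auto simp: x0_def y0_def)
    ultimately show ?thesis
      using assms(1) by (simp add: P_def hweight_def L_def)
  qed
  ultimately have "(\<Sum>x\<in>bitstrings N. \<Sum>y\<in>bitstrings N. if P x y then 1 else 0::nat) \<noteq> 0"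
    by simp blast
  with assms show ?thesis by (simp add: trace_eq del: of_nat_sum)
qed

definition sigmaZ_raise :: "complex \<Rightarrow> qop1" where
  "sigmaZ_raise p u v = sigmaZ u v + (if \<not> u \<and> v then p else 0)"

lemma trace1_ident1_sigmaX: "trace1 ident1 sigmaX = 0"
  by (simp add: trace1_def UNIV_bool ident1_def sigmaX_def)

lemma trace1_ident1_sigmaZ_raise: "trace1 ident1 (sigmaZ_raise p) = 0"
  by (simp add: trace1_def UNIV_bool ident1_def sigmaZ_raise_def sigmaZ_def)

lemma trace1_pauli_comb_sigmaX: "trace1 (pauli_comb b c d) sigmaX = 2 * of_real b"
  by (simp add: trace1_def UNIV_bool pauli_comb_def sigmaX_def sigmaY_def sigmaZ_def)

lemma trace1_pauli_comb_sigmaZ_raise: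
  "trace1 (pauli_comb b c d) (sigmaZ_raise p) = 2 * of_real d + (of_real b + \<i> * of_real c) * p"
  by (simp add: trace1_def UNIV_bool pauli_comb_def sigmaZ_raise_def
      sigmaX_def sigmaY_def sigmaZ_def algebra_simps)

text \<open>When \<open>b + ic = 0\<close> the division yields 0 and the first disjunct may fail, but then
  \<open>b = 0\<close> and \<open>\<sigma>\<^sub>X\<close> is orthogonal to the setting.\<close>

lemma pauli_comb_annihilated:
  "trace1 (pauli_comb b c d) (sigmaZ_raise (- 2 * of_real d / (of_real b + \<i> * of_real c))) = 0
   \<or> trace1 (pauli_comb b c d) sigmaX = 0"
proof (cases "of_real b + \<i> * of_real c = (0::complex)")
  case True
  then have "b = 0" by (simp add: complex_eq_iff)
  then show ?thesis by (simp add: trace1_pauli_comb_sigmaX)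
next
  case False
  then show ?thesis by (simp add: trace1_pauli_comb_sigmaZ_raise)
qed

lemma trace_tensor_decomposition_eq_0:
  assumes decomposition: "\<forall>x\<in>bitstrings N. \<forall>y\<in>bitstrings N.
      \<rho> x y = (\<Sum>i\<in>I. \<Sum>j\<le>N. of_real (\<alpha> i j) * sym_term N j (A i) x y)"
    and traceless: "\<And>k. k < N \<Longrightarrow> trace1 ident1 (W k) = 0"
    and annihilating: "\<And>i. i \<in> I \<Longrightarrow> \<exists>k<N. trace1 (A i) (W k) = 0"
  shows "trace_tensor N \<rho> W = 0"
proof -
  have "trace_tensor N (sym_term N j (A i)) W = 0" if "i \<in> I" for i j
  proof -
    from annihilating[OF that] obtain k where "k < N" "trace1 (A i) (W k) = 0" by blast
    then have "(\<Prod>k<N. trace1 (A i) (W k)) = 0" by (intro prod_zero) auto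
    then show ?thesis by (simp add: trace_tensor_sym_term traceless)
  qed
  moreover have "trace_tensor N \<rho> W = trace_tensor N (\<lambda>x y. \<Sum>i\<in>I. \<Sum>j\<le>N.
      of_real (\<alpha> i j) * sym_term N j (A i) x y) W"
    using decomposition by (intro trace_tensor_cong) auto
  ultimately show ?thesis by (simp add: trace_tensor_sum trace_tensor_scale)
qed

lemma decomposable_dicke_proj_ge:
  assumes "decomposable N (dicke_proj N m) n" "1 \<le> m"
  shows "N + 1 - 2 * m \<le> n"
proof (rule ccontr)
  assume "\<not> ?thesis"
  then have "n \<le> N - 2 * m" "2 * m \<le> N" by auto
  from assms(1) obtain b c d \<alpha> where decomposition: "\<forall>x\<in>bitstrings N. \<forall>y\<in>bitstrings N.
      dicke_proj N m x y = (\<Sum>i\<in>{1..n}. \<Sum>j\<le>N. of_real (\<alpha> i j) *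
        sym_term N j (pauli_comb (b i) (c i) (d i)) x y)"
    unfolding decomposable_def by blast
  define p where "p i = - 2 * of_real (d i) / (of_real (b i) + \<i> * of_real (c i))" for i
  \<comment> \<open>settings are indexed from 1: setting \<open>i\<close> is annihilated on qubit \<open>i - 1\<close>\<close>
  define W where "W k = (if k < N - 2 * m then sigmaZ_raise (p (Suc k)) else sigmaX)" for k
  have "trace_tensor N (dicke_proj N m) W \<noteq> 0"
    using \<open>2 * m \<le> N\<close>
    by (rule trace_tensor_dicke_proj_neq_0) (simp_all add: W_def sigmaZ_raise_def sigmaZ_def)
  moreover have "trace_tensor N (dicke_proj N m) W = 0"
  proof (rule trace_tensor_decomposition_eq_0
      [where A = "\<lambda>i. pauli_comb (b i) (c i) (d i)", OF decomposition])
    show "trace1 ident1 (W k) = 0" if "k < N" for k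
      by (simp add: W_def trace1_ident1_sigmaX trace1_ident1_sigmaZ_raise)
    fix i assume i: "i \<in> {1..n}"
    show "\<exists>k<N. trace1 (pauli_comb (b i) (c i) (d i)) (W k) = 0"
      using pauli_comb_annihilated[of "b i" "c i" "d i", folded p_def]
    proof
      assume "trace1 (pauli_comb (b i) (c i) (d i)) (sigmaZ_raise (p i)) = 0"
      moreover have "i - 1 < N - 2 * m" "Suc (i - 1) = i"
        using i \<open>n \<le> N - 2 * m\<close> by auto
      ultimately show ?thesis
        by (intro exI[of _ "i - 1"]) (simp add: W_def)
    next
      assume "trace1 (pauli_comb (b i) (c i) (d i)) sigmaX = 0"
      moreover have "N - 2 * m \<le> N - 1" "N - 1 < N"
        using assms(2) \<open>2 * m \<le> N\<close> by auto
      ultimately show ?thesis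
        by (intro exI[of _ "N - 1"]) (simp add: W_def)
    qed
  qed
  ultimately show False by contradiction
qed

theorem theorem5:
  fixes N m :: nat
  assumes "1 \<le> N" and "1 \<le> m" and "m \<le> N"
  shows "enat (N + 1 - 2 * m) \<le> meas_complexity N (dicke_proj N m)"
  unfolding meas_complexity_def
  using decomposable_dicke_proj_ge[OF _ assms(2)] by (auto intro: Inf_greatest)

end
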